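(* Let $G$ be an SE-graph and let $P,Q$ be standard, weakly intersecting directed paths in $G$ with $\alpha(t_P)=\alpha(s_Q)$ and $\beta(t_P)\ge\beta(s_Q)$. Then $w(P)w(Q)=q\,w(Q)w(P)$.
   Context: Fix a field $\mathbb K$, $q\in\mathbb K^\ast$. An SE-graph is a finite directed graph $G=(V,E)$ embedded in the plane (planar) whose edges are horizontal directed to the right (H-edges) or vertical directed downward (V-edges), with sources $r_1,\dots,r_m$ on a vertical line in this order upward and sinks $c_1,\dots,c_n$ on a horizontal line in order left to right, sources incident only to H-edges and sinks only to V-edges, every vertex lying on a directed source-to-sink path. Here the sources lie on the ray $\{0\}\times\mathbb R_{\ge0}$ and the sinks on the ray $\mathbb R_{\ge 0}\times\{0\}$; a point $v$ has coordinates $(\alpha(v),\beta(v))$. Standing convention: two vertices have the same first (resp. second) coordinate if and only if they lie on a common vertical (resp. horizontal) directed path of $G$. Let $W$ be the inner vertices; $\mathcal L_G$ is the $\mathbb K$-algebra of Laurent polynomials in $W$ with, for distinct $u,v\in W$: $uv=qvu$ if there is a directed horizontal path from $u$ to $v$; $vu=quv$ if there is a directed vertical path from $u$ to $v$; $uv=vu$ otherwise. Edge weights: $w(e)=v$ if $e=(u,v)$ with $u$ a source; $w(e)=u^{-1}v$ for an H-edge $e=(u,v)$ with $u,v\in W$; $w(e)=1$ for V-edges. The weight of a directed path is the ordered product of its edge weights. For a directed path $P$, $s_P,t_P$ are its first and last vertices; $P$ is standard if it has at least one H-edge. $P,Q$ are weakly intersecting if $P\cap Q=\{s_P,t_P\}\cap\{s_Q,t_Q\}$.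 *)

theory Defs
  imports "HOL-Analysis.Analysis"
begin

type_synonym pt = "real \<times> real"

text \<open>A point v has coordinates (alpha v, beta v) = (fst v, snd v).\<close>

definition hedge :: "pt \<Rightarrow> pt \<Rightarrow> bool" where
  "hedge u v \<longleftrightarrow> snd u = snd v \<and> fst u < fst v"

definition vedge :: "pt \<Rightarrow> pt \<Rightarrow> bool" where
  "vedge u v \<longleftrightarrow> fst u = fst v \<and> snd v < snd u"

definition hrel :: "(pt \<times> pt) set \<Rightarrow> (pt \<times> pt) set" where
  "hrel E = {(u,v). (u,v) \<in> E \<and> hedge u v}"

definition vrel :: "(pt \<times> pt) set \<Rightarrow> (pt \<times> pt) set" where
  "vrel E = {(u,v). (u,v) \<in> E \<and> vedge u v}"

definition se_graph :: "pt set \<Rightarrow> (pt \<times> pt) set \<Rightarrow> pt list \<Rightarrow> pt list \<Rightarrow> bool" where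
  "se_graph V E rs cs \<longleftrightarrow>
     finite V \<and> E \<subseteq> V \<times> V \<and>
     (\<forall>(u,v)\<in>E. hedge u v \<or> vedge u v) \<and>
     \<comment> \<open>planarity of the embedding\<close>
     (\<forall>e\<in>E. \<forall>e'\<in>E. e \<noteq> e' \<longrightarrow>
        closed_segment (fst e) (snd e) \<inter> closed_segment (fst e') (snd e')
          \<subseteq> {fst e, snd e} \<inter> {fst e', snd e'}) \<and>
     (\<forall>x\<in>V. \<forall>(u,v)\<in>E. x \<in> closed_segment u v \<longrightarrow> x = u \<or> x = v) \<and>
     \<comment> \<open>sources\<close>
     set rs \<subseteq> V \<and> sorted_wrt (\<lambda>a b. snd a < snd b) rs \<and>
     (\<forall>r\<in>set rs. fst r = 0 \<and> snd r \<ge> 0) \<and>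
     (\<forall>(u,v)\<in>E. v \<notin> set rs) \<and>
     (\<forall>(u,v)\<in>E. u \<in> set rs \<longrightarrow> hedge u v) \<and>
     \<comment> \<open>sinks\<close>
     set cs \<subseteq> V \<and> sorted_wrt (\<lambda>a b. fst a < fst b) cs \<and>
     (\<forall>c\<in>set cs. snd c = 0 \<and> fst c \<ge> 0) \<and>
     (\<forall>(u,v)\<in>E. u \<notin> set cs) \<and>
     (\<forall>(u,v)\<in>E. v \<in> set cs \<longrightarrow> vedge u v) \<and>
     set rs \<inter> set cs = {} \<and>
     \<comment> \<open>every vertex lies on a directed source-to-sink path\<close>
     (\<forall>v\<in>V. \<exists>r\<in>set rs. \<exists>c\<in>set cs. (r,v) \<in> E\<^sup>* \<and> (v,c) \<in> E\<^sup>*) \<and>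
     \<comment> \<open>standing convention on coordinates\<close>
     (\<forall>u\<in>V. \<forall>v\<in>V. u \<noteq> v \<longrightarrow> \<not> (u \<in> set rs \<and> v \<in> set rs) \<longrightarrow>
        (fst u = fst v \<longleftrightarrow> (u,v) \<in> (vrel E)\<^sup>+ \<or> (v,u) \<in> (vrel E)\<^sup>+)) \<and>
     (\<forall>u\<in>V. \<forall>v\<in>V. u \<noteq> v \<longrightarrow> \<not> (u \<in> set cs \<and> v \<in> set cs) \<longrightarrow>
        (snd u = snd v \<longleftrightarrow> (u,v) \<in> (hrel E)\<^sup>+ \<or> (v,u) \<in> (hrel E)\<^sup>+))"

definition inner :: "pt set \<Rightarrow> pt list \<Rightarrow> pt list \<Rightarrow> pt set" where
  "inner V rs cs = V - set rs - set cs"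

text \<open>Commutation exponent: for inner u, v we have u v = q^(lam E u v) v u in L_G.\<close>
definition lam :: "(pt \<times> pt) set \<Rightarrow> pt \<Rightarrow> pt \<Rightarrow> int" where
  "lam E u v =
     (if (u,v) \<in> (hrel E)\<^sup>+ then 1
      else if (u,v) \<in> (vrel E)\<^sup>+ then -1
      else if (v,u) \<in> (hrel E)\<^sup>+ then -1
      else if (v,u) \<in> (vrel E)\<^sup>+ then 1
      else 0)"

text \<open>Auxiliary total order on vertices (lexicographic) used to fix ordered monomials.\<close>
definition vlt :: "pt \<Rightarrow> pt \<Rightarrow> bool" where
  "vlt u v \<longleftrightarrow> fst u < fst v \<or> (fst u = fst v \<and> snd u < snd v)"

text \<open>The quantum torus L_G is modelled as the K-vector space with basis the ordered
  monomials M(a) = prod_{i in W, increasing} i^(a i), a : W -> Z (elements are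
  finitely supported coefficient functions); then M(a) M(b) = q^(twist a b) M(a+b).\<close>
definition twist :: "pt set \<Rightarrow> (pt \<times> pt) set \<Rightarrow> pt list \<Rightarrow> pt list \<Rightarrow>
    (pt \<Rightarrow> int) \<Rightarrow> (pt \<Rightarrow> int) \<Rightarrow> int" where
  "twist V E rs cs a b =
     (\<Sum>i\<in>inner V rs cs. \<Sum>j\<in>{j\<in>inner V rs cs. vlt j i}. lam E i j * a i * b j)"

definition qmul :: "pt set \<Rightarrow> (pt \<times> pt) set \<Rightarrow> pt list \<Rightarrow> pt list \<Rightarrow> 'k::field \<Rightarrow>
    ((pt \<Rightarrow> int) \<Rightarrow> 'k) \<Rightarrow> ((pt \<Rightarrow> int) \<Rightarrow> 'k) \<Rightarrow> ((pt \<Rightarrow> int) \<Rightarrow> 'k)" where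
  "qmul V E rs cs q f g = (\<lambda>c.
     \<Sum>p\<in>{(a,b). f a \<noteq> 0 \<and> g b \<noteq> 0 \<and> (\<lambda>x. a x + b x) = c}.
        f (fst p) * g (snd p) * q powi twist V E rs cs (fst p) (snd p))"

definition mono :: "(pt \<Rightarrow> int) \<Rightarrow> ((pt \<Rightarrow> int) \<Rightarrow> 'k::field)" where
  "mono a = (\<lambda>c. if c = a then 1 else 0)"

definition unitv :: "pt \<Rightarrow> (pt \<Rightarrow> int)" where
  "unitv v = (\<lambda>u. if u = v then 1 else 0)"

definition ewt :: "pt set \<Rightarrow> (pt \<times> pt) set \<Rightarrow> pt list \<Rightarrow> pt list \<Rightarrow> 'k::field \<Rightarrow>
    pt \<times> pt \<Rightarrow> ((pt \<Rightarrow> int) \<Rightarrow> 'k)" where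
  "ewt V E rs cs q e =
     (if fst e \<in> set rs then mono (unitv (snd e))
      else if hedge (fst e) (snd e)
        then qmul V E rs cs q (mono (\<lambda>x. - unitv (fst e) x)) (mono (unitv (snd e)))
      else mono (\<lambda>x. 0))"

definition dpath :: "(pt \<times> pt) set \<Rightarrow> pt list \<Rightarrow> bool" where
  "dpath E P \<longleftrightarrow> length P \<ge> 2 \<and> (\<forall>i < length P - 1. (P ! i, P ! Suc i) \<in> E)"

definition standard :: "(pt \<times> pt) set \<Rightarrow> pt list \<Rightarrow> bool" where
  "standard E P \<longleftrightarrow> dpath E P \<and> (\<exists>i < length P - 1. hedge (P ! i) (P ! Suc i))"

definition weakly_intersecting :: "pt list \<Rightarrow> pt list \<Rightarrow> bool" where
  "weakly_intersecting P Q \<longleftrightarrow>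
     set P \<inter> set Q = {hd P, last P} \<inter> {hd Q, last Q}"

definition pwt :: "pt set \<Rightarrow> (pt \<times> pt) set \<Rightarrow> pt list \<Rightarrow> pt list \<Rightarrow> 'k::field \<Rightarrow>
    pt list \<Rightarrow> ((pt \<Rightarrow> int) \<Rightarrow> 'k)" where
  "pwt V E rs cs q P =
     foldr (qmul V E rs cs q) (map (ewt V E rs cs q) (zip P (tl P))) (mono (\<lambda>x. 0))"

end

theory Submission
  imports Defs
begin

text \<open>Every path weight is a nonzero scalar times a single ordered monomial, so
  w(P) w(Q) = q^s w(Q) w(P), where s is the value of the skew-symmetric form
  (a, b) \<mapsto> \<Sum>i j. \<lambda>(i,j) a(i) b(j) on the exponent vectors of P and Q.
  Pairing the monomial of a vertex z with the exponent vector of Q gives, for z weakly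
  left of and above hd Q, the indicator of z lying on the column of hd Q: only the first
  horizontal edge of Q, which starts on that column, contributes.  Summing over the edges
  of P therefore telescopes to the indicator at last P minus the one at hd P, i.e. to 1,
  since P is standard and so starts strictly left of that column.\<close>

subsection \<open>The commutation exponent\<close>

lemma hedge_not_vedge: "hedge u v \<Longrightarrow> \<not> vedge u v"
  by (simp add: hedge_def vedge_def)

lemma trancl_hrel_coords: "(u, v) \<in> (hrel E)\<^sup>+ \<Longrightarrow> snd u = snd v \<and> fst u < fst v"
  by (induction rule: trancl_induct) (auto simp: hrel_def hedge_def)

lemma trancl_vrel_coords: "(u, v) \<in> (vrel E)\<^sup>+ \<Longrightarrow> fst u = fst v \<and> snd v < snd u"
  by (induction rule: trancl_induct) (auto simp: vrel_def vedge_def)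

lemma trancl_hrel_exclusive:
  assumes "(u, v) \<in> (hrel E)\<^sup>+"
  shows "(v, u) \<notin> (hrel E)\<^sup>+" "(u, v) \<notin> (vrel E)\<^sup>+" "(v, u) \<notin> (vrel E)\<^sup>+"
proof -
  have "fst u < fst v" using trancl_hrel_coords[OF assms] by blast
  then show "(v, u) \<notin> (hrel E)\<^sup>+" "(u, v) \<notin> (vrel E)\<^sup>+" "(v, u) \<notin> (vrel E)\<^sup>+"
    using trancl_hrel_coords[of v u E] trancl_vrel_coords[of u v E] trancl_vrel_coords[of v u E]
    by auto
qed

lemma trancl_vrel_asym: "(u, v) \<in> (vrel E)\<^sup>+ \<Longrightarrow> (v, u) \<notin> (vrel E)\<^sup>+"
  using trancl_vrel_coords[of u v E] trancl_vrel_coords[of v u E] by auto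

lemma lam_antisym: "lam E v u = - lam E u v"
  using trancl_hrel_exclusive[of u v E] trancl_hrel_exclusive[of v u E]
    trancl_vrel_asym[of u v E] trancl_vrel_asym[of v u E]
  unfolding lam_def by auto

lemma lam_self: "lam E u u = 0"
  using trancl_hrel_exclusive[of u u E] trancl_vrel_asym[of u u E]
  unfolding lam_def by auto

lemma lam_eq_0_off_lines: "fst u \<noteq> fst v \<Longrightarrow> snd u \<noteq> snd v \<Longrightarrow> lam E u v = 0"
  using trancl_hrel_coords[of u v E] trancl_hrel_coords[of v u E]
    trancl_vrel_coords[of u v E] trancl_vrel_coords[of v u E]
  unfolding lam_def by auto

subsection \<open>Scaled monomials\<close>

definition scaled_mono :: "'k::field \<Rightarrow> (pt \<Rightarrow> int) \<Rightarrow> ((pt \<Rightarrow> int) \<Rightarrow> 'k)" where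
  "scaled_mono \<gamma> a = (\<lambda>c. if c = a then \<gamma> else 0)"

lemma mono_eq_scaled_mono: "mono a = scaled_mono 1 a"
  unfolding mono_def scaled_mono_def by simp

lemma qmul_scaled_mono:
  assumes "\<gamma> \<noteq> 0" "\<delta> \<noteq> 0"
  shows "qmul V E rs cs q (scaled_mono \<gamma> a) (scaled_mono \<delta> b)
       = scaled_mono (\<gamma> * \<delta> * q powi twist V E rs cs a b) (\<lambda>x. a x + b x)"
proof
  fix c
  have "{(a', b'). scaled_mono \<gamma> a a' \<noteq> 0 \<and> scaled_mono \<delta> b b' \<noteq> 0 \<and> (\<lambda>x. a' x + b' x) = c}
      = (if c = (\<lambda>x. a x + b x) then {(a, b)} else {})"
    using assms by (auto simp: scaled_mono_def)
  then show "qmul V E rs cs q (scaled_mono \<gamma> a) (scaled_mono \<delta> b) c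
      = scaled_mono (\<gamma> * \<delta> * q powi twist V E rs cs a b) (\<lambda>x. a x + b x) c"
    unfolding qmul_def by (simp add: scaled_mono_def)
qed

definition edge_exp :: "pt list \<Rightarrow> pt \<times> pt \<Rightarrow> pt \<Rightarrow> int" where
  "edge_exp rs e =
     (if fst e \<in> set rs then unitv (snd e)
      else if hedge (fst e) (snd e) then (\<lambda>x. unitv (snd e) x - unitv (fst e) x)
      else (\<lambda>x. 0))"

definition path_exp :: "pt list \<Rightarrow> pt list \<Rightarrow> pt \<Rightarrow> int" where
  "path_exp rs P = (\<lambda>x. \<Sum>k < length P - 1. edge_exp rs (P ! k, P ! Suc k) x)"

lemma ewt_eq_scaled_mono:
  assumes "q \<noteq> 0"
  shows "\<exists>\<gamma>. \<gamma> \<noteq> 0 \<and> ewt V E rs cs q e = scaled_mono \<gamma> (edge_exp rs e)"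
proof (cases "fst e \<notin> set rs \<and> hedge (fst e) (snd e)")
  case True
  have "(\<lambda>x. - unitv (fst e) x + unitv (snd e) x) = edge_exp rs e"
    using True by (simp add: edge_exp_def)
  then show ?thesis
    using True assms
    by (intro exI[of _ "q powi twist V E rs cs (\<lambda>x. - unitv (fst e) x) (unitv (snd e))"])
      (simp add: ewt_def mono_eq_scaled_mono qmul_scaled_mono)
next
  case False
  then show ?thesis
    by (intro exI[of _ 1]) (auto simp: ewt_def edge_exp_def mono_eq_scaled_mono)
qed

lemma foldr_qmul_scaled_mono:
  assumes "q \<noteq> 0" and "\<forall>e \<in> set es. \<exists>\<gamma>. \<gamma> \<noteq> 0 \<and> f e = scaled_mono \<gamma> (g e)"
  shows "\<exists>\<gamma>. \<gamma> \<noteq> 0 \<and> foldr (qmul V E rs cs q) (map f es) (scaled_mono 1 (\<lambda>x. 0))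
           = scaled_mono \<gamma> (\<lambda>x. \<Sum>e \<leftarrow> es. g e x)"
  using assms(2)
proof (induction es)
  case Nil
  then show ?case by (intro exI[of _ 1]) simp
next
  case (Cons e es)
  then obtain \<gamma> \<gamma>' where "\<gamma> \<noteq> 0" "f e = scaled_mono \<gamma> (g e)" and "\<gamma>' \<noteq> 0"
    "foldr (qmul V E rs cs q) (map f es) (scaled_mono 1 (\<lambda>x. 0))
       = scaled_mono \<gamma>' (\<lambda>x. \<Sum>e \<leftarrow> es. g e x)"
    by auto
  then show ?case
    using assms(1)
    by (intro exI[of _ "\<gamma> * \<gamma>' * q powi twist V E rs cs (g e) (\<lambda>x. \<Sum>e \<leftarrow> es. g e x)"])
      (simp add: qmul_scaled_mono)
qed

lemma pwt_eq_scaled_mono: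
  assumes "q \<noteq> 0"
  shows "\<exists>\<gamma>. \<gamma> \<noteq> 0 \<and> pwt V E rs cs q P = scaled_mono \<gamma> (path_exp rs P)"
proof -
  have "path_exp rs P = (\<lambda>x. \<Sum>e \<leftarrow> zip P (tl P). edge_exp rs e x)"
    by (simp add: path_exp_def sum_list_sum_nth atLeast0LessThan nth_tl)
  then show ?thesis
    unfolding pwt_def mono_eq_scaled_mono
    by (simp only:) (rule foldr_qmul_scaled_mono[OF assms], use ewt_eq_scaled_mono[OF assms] in blast)
qed

subsection \<open>The skew form governing commutation\<close>

definition skew_form :: "pt set \<Rightarrow> (pt \<times> pt) set \<Rightarrow> (pt \<Rightarrow> int) \<Rightarrow> (pt \<Rightarrow> int) \<Rightarrow> int" where
  "skew_form W E a b = (\<Sum>i\<in>W. \<Sum>j\<in>W. lam E i j * a i * b j)"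

lemma twist_swap:
  assumes "finite (inner V rs cs)"
  shows "twist V E rs cs a b = twist V E rs cs b a + skew_form (inner V rs cs) E a b"
proof -
  let ?W = "inner V rs cs"
  let ?t = "\<lambda>i j. lam E i j * a i * b j"
  have ab: "twist V E rs cs a b = (\<Sum>i\<in>?W. \<Sum>j\<in>?W. if vlt j i then ?t i j else 0)"
    unfolding twist_def by (simp add: sum.inter_filter[OF assms])
  have "twist V E rs cs b a = (\<Sum>j\<in>?W. \<Sum>i\<in>?W. if vlt i j then lam E j i * b j * a i else 0)"
    unfolding twist_def by (simp add: sum.inter_filter[OF assms])
  also have "\<dots> = (\<Sum>i\<in>?W. \<Sum>j\<in>?W. if vlt i j then lam E j i * b j * a i else 0)"
    by (rule sum.swap)
  also have "\<dots> = (\<Sum>i\<in>?W. \<Sum>j\<in>?W. if vlt i j then - ?t i j else 0)"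
  proof (intro sum.cong refl)
    fix i j
    show "(if vlt i j then lam E j i * b j * a i else 0) = (if vlt i j then - ?t i j else 0)"
      using lam_antisym[of E i j] by simp
  qed
  finally have ba: "twist V E rs cs b a = \<dots>" .
  have "(if vlt j i then ?t i j else 0) - (if vlt i j then - ?t i j else 0) = ?t i j" for i j
  proof (cases "i = j")
    case False
    then have "vlt i j \<longleftrightarrow> \<not> vlt j i"
      by (auto simp: vlt_def prod_eq_iff)
    then show ?thesis by auto
  qed (simp add: lam_self)
  then have "skew_form ?W E a b = (\<Sum>i\<in>?W. \<Sum>j\<in>?W.
      (if vlt j i then ?t i j else 0) - (if vlt i j then - ?t i j else 0))"
    unfolding skew_form_def by presburger
  also have "\<dots> = twist V E rs cs a b - twist V E rs cs b a"
    unfolding ab ba by (simp add: sum_subtractf)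
  finally show ?thesis by simp
qed

lemma qmul_scaled_mono_commute:
  assumes "q \<noteq> 0" "\<gamma> \<noteq> 0" "\<delta> \<noteq> 0" and "twist V E rs cs a b = twist V E rs cs b a + 1"
  shows "qmul V E rs cs q (scaled_mono \<gamma> a) (scaled_mono \<delta> b)
       = (\<lambda>c. q * qmul V E rs cs q (scaled_mono \<delta> b) (scaled_mono \<gamma> a) c)"
proof -
  have "(\<lambda>x. b x + a x) = (\<lambda>x. a x + b x)"
    by (simp add: add.commute)
  moreover have "q powi twist V E rs cs a b = q * q powi twist V E rs cs b a"
    using assms(1,4) by (simp add: power_int_add)
  ultimately show ?thesis
    using assms(1-3) by (simp add: qmul_scaled_mono) (auto simp: scaled_mono_def)
qed

lemma skew_form_sum_left:
  "skew_form W E (\<lambda>x. \<Sum>k\<in>K. f k x) b = (\<Sum>k\<in>K. skew_form W E (f k) b)"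
proof -
  have "skew_form W E (\<lambda>x. \<Sum>k\<in>K. f k x) b = (\<Sum>i\<in>W. \<Sum>j\<in>W. \<Sum>k\<in>K. lam E i j * f k i * b j)"
    unfolding skew_form_def by (simp add: sum_distrib_left sum_distrib_right)
  also have "\<dots> = (\<Sum>k\<in>K. \<Sum>i\<in>W. \<Sum>j\<in>W. lam E i j * f k i * b j)"
    by (simp only: sum.swap[of _ W K])
  finally show ?thesis unfolding skew_form_def .
qed

lemma skew_form_sum_right:
  "skew_form W E a (\<lambda>x. \<Sum>k\<in>K. f k x) = (\<Sum>k\<in>K. skew_form W E a (f k))"
proof -
  have "skew_form W E a (\<lambda>x. \<Sum>k\<in>K. f k x) = (\<Sum>i\<in>W. \<Sum>j\<in>W. \<Sum>k\<in>K. lam E i j * a i * f k j)"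
    unfolding skew_form_def by (simp add: sum_distrib_left)
  also have "\<dots> = (\<Sum>k\<in>K. \<Sum>i\<in>W. \<Sum>j\<in>W. lam E i j * a i * f k j)"
    by (simp only: sum.swap[of _ W K])
  finally show ?thesis unfolding skew_form_def .
qed

lemma skew_form_diff_left:
  "skew_form W E (\<lambda>x. a x - a' x) b = skew_form W E a b - skew_form W E a' b"
  unfolding skew_form_def by (simp add: algebra_simps sum_subtractf)

lemma skew_form_diff_right:
  "skew_form W E a (\<lambda>x. b x - b' x) = skew_form W E a b - skew_form W E a b'"
  unfolding skew_form_def by (simp add: algebra_simps sum_subtractf)

lemma skew_form_unitv_left:
  assumes "finite W"
  shows "skew_form W E (unitv z) b = (if z \<in> W then \<Sum>j\<in>W. lam E z j * b j else 0)"
proof -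
  have "(\<Sum>j\<in>W. lam E i j * unitv z i * b j) = (if i = z then \<Sum>j\<in>W. lam E z j * b j else 0)" for i
    unfolding unitv_def by auto
  then show ?thesis
    unfolding skew_form_def using assms by simp
qed

lemma skew_form_unitv_unitv:
  assumes "finite W"
  shows "skew_form W E (unitv z) (unitv y) = (if z \<in> W \<and> y \<in> W then lam E z y else 0)"
proof -
  have "(\<Sum>j\<in>W. lam E z j * unitv y j) = (if y \<in> W then lam E z y else 0)"
    unfolding unitv_def using assms by (simp add: if_distrib[of "\<lambda>t. _ * t"] cong: if_cong)
  then show ?thesis
    using skew_form_unitv_left[OF assms] by simp
qed

subsection \<open>SE-graphs\<close>

locale SE_graph =
  fixes V :: "pt set" and E :: "(pt \<times> pt) set" and rs cs :: "pt list"
  assumes se_graph: "se_graph V E rs cs"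
begin

abbreviation W :: "pt set" where "W \<equiv> inner V rs cs"

lemma se_graph_conjuncts:
  "finite V" "E \<subseteq> V \<times> V" "\<forall>(u, v) \<in> E. hedge u v \<or> vedge u v"
  "\<forall>r \<in> set rs. fst r = 0 \<and> snd r \<ge> 0"
  "\<forall>(u, v) \<in> E. v \<notin> set rs" "\<forall>(u, v) \<in> E. u \<in> set rs \<longrightarrow> hedge u v"
  "\<forall>(u, v) \<in> E. u \<notin> set cs" "\<forall>(u, v) \<in> E. v \<in> set cs \<longrightarrow> vedge u v"
  "\<forall>v \<in> V. \<exists>r \<in> set rs. \<exists>c \<in> set cs. (r, v) \<in> E\<^sup>* \<and> (v, c) \<in> E\<^sup>*"
  "\<forall>u \<in> V. \<forall>v \<in> V. u \<noteq> v \<longrightarrow> \<not> (u \<in> set rs \<and> v \<in> set rs) \<longrightarrow>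
     (fst u = fst v \<longleftrightarrow> (u, v) \<in> (vrel E)\<^sup>+ \<or> (v, u) \<in> (vrel E)\<^sup>+)"
  "\<forall>u \<in> V. \<forall>v \<in> V. u \<noteq> v \<longrightarrow> \<not> (u \<in> set cs \<and> v \<in> set cs) \<longrightarrow>
     (snd u = snd v \<longleftrightarrow> (u, v) \<in> (hrel E)\<^sup>+ \<or> (v, u) \<in> (hrel E)\<^sup>+)"
  using se_graph unfolding se_graph_def by - (elim conjE, assumption)+

lemma finite_inner: "finite W"
  using se_graph_conjuncts(1) unfolding inner_def by simp

lemma edge_in_V: "(u, v) \<in> E \<Longrightarrow> u \<in> V \<and> v \<in> V"
  using se_graph_conjuncts(2) by blast

lemma edge_hedge_or_vedge: "(u, v) \<in> E \<Longrightarrow> hedge u v \<or> vedge u v"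
  using se_graph_conjuncts(3) by blast

lemma source_fst: "r \<in> set rs \<Longrightarrow> fst r = 0"
  using se_graph_conjuncts(4) by blast

lemma edge_target_not_source: "(u, v) \<in> E \<Longrightarrow> v \<notin> set rs"
  using se_graph_conjuncts(5) by blast

lemma source_edge_hedge: "(u, v) \<in> E \<Longrightarrow> u \<in> set rs \<Longrightarrow> hedge u v"
  using se_graph_conjuncts(6) by blast

lemma edge_source_not_sink: "(u, v) \<in> E \<Longrightarrow> u \<notin> set cs"
  using se_graph_conjuncts(7) by blast

lemma sink_edge_vedge: "(u, v) \<in> E \<Longrightarrow> v \<in> set cs \<Longrightarrow> vedge u v"
  using se_graph_conjuncts(8) by blast

lemma reachable_from_source: "v \<in> V \<Longrightarrow> \<exists>r \<in> set rs. (r, v) \<in> E\<^sup>*"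
  using se_graph_conjuncts(9) by blast

lemma same_column:
  "\<lbrakk>u \<in> V; v \<in> V; u \<noteq> v; \<not> (u \<in> set rs \<and> v \<in> set rs); fst u = fst v\<rbrakk>
    \<Longrightarrow> (u, v) \<in> (vrel E)\<^sup>+ \<or> (v, u) \<in> (vrel E)\<^sup>+"
  using se_graph_conjuncts(10) by blast

lemma same_row:
  "\<lbrakk>u \<in> V; v \<in> V; u \<noteq> v; \<not> (u \<in> set cs \<and> v \<in> set cs); snd u = snd v\<rbrakk>
    \<Longrightarrow> (u, v) \<in> (hrel E)\<^sup>+ \<or> (v, u) \<in> (hrel E)\<^sup>+"
  using se_graph_conjuncts(11) by blast

lemma edge_coords_mono: "(u, v) \<in> E \<Longrightarrow> fst u \<le> fst v \<and> snd v \<le> snd u"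
  using edge_hedge_or_vedge[of u v] by (auto simp: hedge_def vedge_def)

lemma fst_nonneg: "v \<in> V \<Longrightarrow> 0 \<le> fst v"
proof -
  assume "v \<in> V"
  then obtain r where r: "r \<in> set rs" "(r, v) \<in> E\<^sup>*"
    using reachable_from_source by blast
  from r(2) have "fst r \<le> fst v"
    by (induction rule: rtrancl_induct) (auto dest: edge_coords_mono)
  with source_fst[OF r(1)] show ?thesis by simp
qed

lemma lam_same_row:
  assumes "u \<in> V" "v \<in> V" "u \<notin> set cs" "snd u = snd v" "fst u < fst v"
  shows "lam E u v = 1"
proof -
  have "u \<noteq> v" using assms(5) by auto
  then have "(u, v) \<in> (hrel E)\<^sup>+ \<or> (v, u) \<in> (hrel E)\<^sup>+"
    using same_row[OF assms(1,2)] assms(3,4) by blast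
  moreover have "(v, u) \<notin> (hrel E)\<^sup>+"
    using trancl_hrel_coords[of v u E] assms(5) by auto
  ultimately show ?thesis unfolding lam_def by simp
qed

lemma lam_same_column:
  assumes "u \<in> V" "v \<in> V" "u \<notin> set rs" "fst u = fst v" "snd v < snd u"
  shows "lam E u v = -1"
proof -
  have "u \<noteq> v" using assms(5) by auto
  then have "(u, v) \<in> (vrel E)\<^sup>+ \<or> (v, u) \<in> (vrel E)\<^sup>+"
    using same_column[OF assms(1,2)] assms(3,4) by blast
  moreover have "(v, u) \<notin> (vrel E)\<^sup>+"
    using trancl_vrel_coords[of v u E] assms(5) by auto
  moreover have "(u, v) \<notin> (hrel E)\<^sup>+"
    using trancl_hrel_coords[of u v E] assms(4) by auto
  ultimately show ?thesis unfolding lam_def by simp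
qed

lemma eq_if_same_coords:
  assumes "u \<in> V" "v \<in> V" "u \<notin> set rs" "fst u = fst v" "snd u = snd v"
  shows "u = v"
proof (rule ccontr)
  assume "u \<noteq> v"
  then have "(u, v) \<in> (vrel E)\<^sup>+ \<or> (v, u) \<in> (vrel E)\<^sup>+"
    using same_column[OF assms(1,2)] assms(3,4) by blast
  then show False
    using trancl_vrel_coords[of u v E] trancl_vrel_coords[of v u E] assms(5) by auto
qed

lemma dpath_edge: "dpath E P \<Longrightarrow> k < length P - 1 \<Longrightarrow> (P ! k, P ! Suc k) \<in> E"
  unfolding dpath_def by blast

lemma dpath_nth_in_V:
  assumes "dpath E P" "k < length P"
  shows "P ! k \<in> V"
proof (cases "k < length P - 1")
  case True
  then show ?thesis using edge_in_V dpath_edge[OF assms(1)] by blast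
next
  case False
  then have "k = Suc (k - 1)" "k - 1 < length P - 1"
    using assms unfolding dpath_def by auto
  then show ?thesis using edge_in_V dpath_edge[OF assms(1), of "k - 1"] by metis
qed

lemma dpath_coords_mono:
  assumes "dpath E P" "i \<le> j" "j < length P"
  shows "fst (P ! i) \<le> fst (P ! j) \<and> snd (P ! j) \<le> snd (P ! i)"
  using assms(2,3)
proof (induction j)
  case (Suc j)
  show ?case
  proof (cases "i = Suc j")
    case False
    with Suc have "i \<le> j" "j < length P - 1" by auto
    with Suc.IH edge_coords_mono[OF dpath_edge[OF assms(1)]] show ?thesis
      by fastforce
  qed simp
qed simp

lemma standard_fst_hd_less_last:
  assumes "standard E P"
  shows "fst (hd P) < fst (last P)"
proof -
  have P: "dpath E P" using assms unfolding standard_def by blast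
  then have "P \<noteq> []" unfolding dpath_def by auto
  then have ends: "hd P = P ! 0" "last P = P ! (length P - 1)"
    by (simp_all add: hd_conv_nth last_conv_nth)
  obtain k where k: "k < length P - 1" "hedge (P ! k) (P ! Suc k)"
    using assms unfolding standard_def by blast
  have "fst (P ! 0) \<le> fst (P ! k)" "fst (P ! Suc k) \<le> fst (P ! (length P - 1))"
    using dpath_coords_mono[OF P] k(1) by auto
  with k(2) show ?thesis
    unfolding ends hedge_def by linarith
qed

lemma hedge_target_in_inner:
  assumes "(u, v) \<in> E" "hedge u v"
  shows "v \<in> W"
proof -
  have "v \<notin> set cs"
    using sink_edge_vedge[OF assms(1)] hedge_not_vedge[OF assms(2)] by blast
  then show ?thesis
    using edge_in_V[OF assms(1)] edge_target_not_source[OF assms(1)] unfolding inner_def by blast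
qed

lemma edge_source_in_inner: "(u, v) \<in> E \<Longrightarrow> u \<notin> set rs \<Longrightarrow> u \<in> W"
  using edge_in_V edge_source_not_sink unfolding inner_def by blast

lemma skew_form_edge_exp_left:
  assumes "(u, v) \<in> E"
  shows "skew_form W E (edge_exp rs (u, v)) b
       = (if vedge u v then 0 else skew_form W E (unitv v) b - skew_form W E (unitv u) b)"
proof -
  consider "u \<in> set rs" | "u \<notin> set rs" "hedge u v" | "vedge u v" "\<not> hedge u v"
    using edge_hedge_or_vedge[OF assms] by blast
  then show ?thesis
  proof cases
    case 1
    then have "hedge u v" "u \<notin> W"
      using source_edge_hedge[OF assms] unfolding inner_def by auto
    then show ?thesis
      using 1 hedge_not_vedge by (simp add: edge_exp_def skew_form_unitv_left[OF finite_inner])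
  next
    case 2
    then show ?thesis
      using hedge_not_vedge by (simp add: edge_exp_def skew_form_diff_left)
  next
    case 3
    then show ?thesis
      using source_edge_hedge[OF assms] by (auto simp: edge_exp_def skew_form_def)
  qed
qed

lemma skew_form_unitv_edge_exp:
  assumes "z \<in> W" "(u, v) \<in> E" "u \<notin> set rs"
  shows "skew_form W E (unitv z) (edge_exp rs (u, v)) = (if hedge u v then lam E z v - lam E z u else 0)"
proof (cases "hedge u v")
  case True
  then have "u \<in> W" "v \<in> W"
    using edge_source_in_inner[OF assms(2,3)] hedge_target_in_inner[OF assms(2)] by auto
  then show ?thesis
    using True assms(1,3)
    by (simp add: edge_exp_def skew_form_diff_right skew_form_unitv_unitv[OF finite_inner])
next
  case False
  then show ?thesis
    using assms(3) by (simp add: edge_exp_def skew_form_def)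
qed

lemma lam_diff_along_hedge:
  assumes "z \<in> W" "(u, v) \<in> E" "hedge u v" "fst z \<le> fst u" "snd u \<le> snd z"
  shows "lam E z v - lam E z u = of_bool (fst z = fst u)"
proof -
  have V: "z \<in> V" "u \<in> V" "v \<in> V" and z: "z \<notin> set rs" "z \<notin> set cs"
    using assms(1) edge_in_V[OF assms(2)] unfolding inner_def by auto
  have uv: "snd v = snd u" "fst u < fst v"
    using assms(3) unfolding hedge_def by auto
  consider "z = u" | "fst z = fst u" "snd u < snd z" | "fst z < fst u" "snd z = snd u"
    | "fst z < fst u" "snd z \<noteq> snd u"
    using eq_if_same_coords[OF V(1,2) z(1)] assms(4,5) by fastforce
  then show ?thesis
  proof cases
    case 1
    then show ?thesis using lam_same_row[OF V(1,3) z(2)] lam_self uv by simp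
  next
    case 2
    then show ?thesis
      using lam_same_column[OF V(1,2) z(1)] lam_eq_0_off_lines[of z v E] uv by simp
  next
    case 3
    then show ?thesis
      using lam_same_row[OF V(1,2) z(2)] lam_same_row[OF V(1,3) z(2)] uv by simp
  next
    case 4
    then show ?thesis
      using lam_eq_0_off_lines[of z u E] lam_eq_0_off_lines[of z v E] uv by simp
  qed
qed

lemma unique_hedge_on_first_column:
  assumes "standard E Q"
  shows "\<exists>!m. m < length Q - 1 \<and> hedge (Q ! m) (Q ! Suc m) \<and> fst (Q ! m) = fst (Q ! 0)"
proof -
  let ?H = "\<lambda>m. m < length Q - 1 \<and> hedge (Q ! m) (Q ! Suc m)"
  have Q: "dpath E Q" using assms unfolding standard_def by blast
  have "\<exists>m. ?H m" using assms unfolding standard_def by blast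
  then obtain i where i: "?H i" and before: "\<forall>m < i. \<not> ?H m"
    unfolding exists_least_iff[of ?H] by blast
  have column: "fst (Q ! m) = fst (Q ! 0)" if "m \<le> i" for m
    using that
  proof (induction m)
    case (Suc m)
    then have "m < i" by simp
    then have "(Q ! m, Q ! Suc m) \<in> E" "\<not> hedge (Q ! m) (Q ! Suc m)"
      using i before dpath_edge[OF Q] by auto
    then have "vedge (Q ! m) (Q ! Suc m)" using edge_hedge_or_vedge by blast
    then show ?case using Suc.IH \<open>m < i\<close> unfolding vedge_def by simp
  qed simp
  have later: "fst (Q ! 0) < fst (Q ! m)" if "?H m" "i < m" for m
  proof -
    have "fst (Q ! 0) \<le> fst (Q ! i)" "fst (Q ! Suc i) \<le> fst (Q ! m)"
      using dpath_coords_mono[OF Q] that by auto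
    with i show ?thesis unfolding hedge_def by linarith
  qed
  show ?thesis
  proof (rule ex1I[of _ i])
    show "i < length Q - 1 \<and> hedge (Q ! i) (Q ! Suc i) \<and> fst (Q ! i) = fst (Q ! 0)"
      using i column[of i] by simp
  next
    fix m
    assume m: "m < length Q - 1 \<and> hedge (Q ! m) (Q ! Suc m) \<and> fst (Q ! m) = fst (Q ! 0)"
    show "m = i"
    proof (rule ccontr)
      assume "m \<noteq> i"
      then have "m < i \<or> i < m" by linarith
      then show False using before later[of m] m by auto
    qed
  qed
qed

lemma dpath_not_source:
  assumes "dpath E Q" "0 < fst (Q ! 0)" "m < length Q"
  shows "Q ! m \<notin> set rs"
proof (cases m)
  case 0
  then show ?thesis using assms(2) source_fst[of "Q ! 0"] by auto
next
  case (Suc k)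
  then have "(Q ! k, Q ! m) \<in> E"
    using dpath_edge[OF assms(1), of k] assms(3) by auto
  then show ?thesis by (rule edge_target_not_source)
qed

lemma skew_form_unitv_path_edge:
  assumes "dpath E Q" "0 < fst (Q ! 0)" "m < length Q - 1"
    and "z \<in> W" "fst z \<le> fst (Q ! 0)" "snd (Q ! 0) \<le> snd z"
  shows "skew_form W E (unitv z) (edge_exp rs (Q ! m, Q ! Suc m))
       = of_bool (hedge (Q ! m) (Q ! Suc m) \<and> fst (Q ! m) = fst (Q ! 0) \<and> fst z = fst (Q ! 0))"
proof -
  have e: "(Q ! m, Q ! Suc m) \<in> E" using dpath_edge[OF assms(1,3)] .
  have "Q ! m \<notin> set rs" using dpath_not_source[OF assms(1,2)] assms(3) by simp
  note skew = skew_form_unitv_edge_exp[OF assms(4) e this]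
  have Qm: "fst (Q ! 0) \<le> fst (Q ! m)" "snd (Q ! m) \<le> snd (Q ! 0)"
    using dpath_coords_mono[OF assms(1), of 0 m] assms(3) by auto
  show ?thesis
  proof (cases "hedge (Q ! m) (Q ! Suc m)")
    case True
    have "fst z \<le> fst (Q ! m)" "snd (Q ! m) \<le> snd z"
      using order_trans[OF assms(5) Qm(1)] order_trans[OF Qm(2) assms(6)] .
    note lam_diff = lam_diff_along_hedge[OF assms(4) e True this]
    have "fst z = fst (Q ! m) \<longleftrightarrow> fst (Q ! m) = fst (Q ! 0) \<and> fst z = fst (Q ! 0)"
      using Qm(1) assms(5) by auto
    then show ?thesis
      using skew lam_diff True by simp
  qed (simp add: skew)
qed

lemma skew_form_unitv_path_exp:
  assumes "standard E Q" "0 < fst (Q ! 0)"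
    and "z \<in> W" "fst z \<le> fst (Q ! 0)" "snd (Q ! 0) \<le> snd z"
  shows "skew_form W E (unitv z) (path_exp rs Q) = of_bool (fst z = fst (Q ! 0))"
proof -
  have Q: "dpath E Q" using assms(1) unfolding standard_def by blast
  obtain i where i: "i < length Q - 1 \<and> hedge (Q ! i) (Q ! Suc i) \<and> fst (Q ! i) = fst (Q ! 0)"
    and unique: "\<And>m. m < length Q - 1 \<and> hedge (Q ! m) (Q ! Suc m) \<and> fst (Q ! m) = fst (Q ! 0) \<Longrightarrow> m = i"
    using unique_hedge_on_first_column[OF assms(1)] by blast
  have "skew_form W E (unitv z) (path_exp rs Q)
      = (\<Sum>m < length Q - 1. skew_form W E (unitv z) (edge_exp rs (Q ! m, Q ! Suc m)))"
    unfolding path_exp_def by (rule skew_form_sum_right)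
  also have "\<dots> = (\<Sum>m < length Q - 1. if m = i then of_bool (fst z = fst (Q ! 0)) else 0)"
  proof (rule sum.cong[OF refl])
    fix m
    assume "m \<in> {..<length Q - 1}"
    then have m: "m < length Q - 1" by simp
    then have first: "hedge (Q ! m) (Q ! Suc m) \<and> fst (Q ! m) = fst (Q ! 0) \<longleftrightarrow> m = i"
      using i unique by blast
    then show "skew_form W E (unitv z) (edge_exp rs (Q ! m, Q ! Suc m))
        = (if m = i then of_bool (fst z = fst (Q ! 0)) else 0)"
      unfolding skew_form_unitv_path_edge[OF Q assms(2) m assms(3-5)] conj_assoc[symmetric] first
      by simp
  qed
  also have "\<dots> = of_bool (fst z = fst (Q ! 0))"
    using i by simp
  finally show ?thesis .
qed

lemma skew_form_edge_exp_path_exp: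
  assumes "standard E Q" "0 < fst (Q ! 0)" "(u, v) \<in> E"
    and "fst u \<le> fst (Q ! 0)" "snd (Q ! 0) \<le> snd u"
    and "fst v \<le> fst (Q ! 0)" "snd (Q ! 0) \<le> snd v"
  shows "skew_form W E (edge_exp rs (u, v)) (path_exp rs Q)
       = of_bool (fst v = fst (Q ! 0)) - of_bool (fst u = fst (Q ! 0))"
proof (cases "vedge u v")
  case True
  then show ?thesis
    using skew_form_edge_exp_left[OF assms(3)] by (simp add: vedge_def)
next
  case False
  then have "hedge u v" using edge_hedge_or_vedge[OF assms(3)] by blast
  then have "v \<in> W" by (rule hedge_target_in_inner[OF assms(3)])
  note v = skew_form_unitv_path_exp[OF assms(1,2) this assms(6,7)]
  have u: "skew_form W E (unitv u) (path_exp rs Q) = of_bool (fst u = fst (Q ! 0))"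
  proof (cases "u \<in> set rs")
    case True
    then have "u \<notin> W" unfolding inner_def by blast
    then show ?thesis
      using True source_fst assms(2) by (simp add: skew_form_unitv_left[OF finite_inner])
  next
    case False
    then have "u \<in> W" by (rule edge_source_in_inner[OF assms(3)])
    then show ?thesis by (rule skew_form_unitv_path_exp[OF assms(1,2) _ assms(4,5)])
  qed
  show ?thesis
    using skew_form_edge_exp_left[OF assms(3)] False u v by simp
qed

lemma skew_form_path_exp_path_exp:
  assumes "standard E P" "standard E Q"
    and "fst (last P) = fst (hd Q)" "snd (hd Q) \<le> snd (last P)"
  shows "skew_form W E (path_exp rs P) (path_exp rs Q) = 1"
proof -
  have P: "dpath E P" and Q: "dpath E Q"
    using assms(1,2) unfolding standard_def by blast+
  then have "P \<noteq> []" "Q \<noteq> []" unfolding dpath_def by auto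
  then have ends: "hd P = P ! 0" "last P = P ! (length P - 1)" "hd Q = Q ! 0"
    by (simp_all add: hd_conv_nth last_conv_nth)
  let ?c = "fst (Q ! 0)"
  let ?on_column = "\<lambda>k. of_bool (fst (P ! k) = ?c) :: int"
  have last_P: "fst (P ! (length P - 1)) = ?c" "snd (Q ! 0) \<le> snd (P ! (length P - 1))"
    using assms(3,4) unfolding ends by simp_all
  have start: "fst (P ! 0) < ?c"
    using standard_fst_hd_less_last[OF assms(1)] last_P(1) unfolding ends by simp
  moreover have "0 \<le> fst (P ! 0)"
    using fst_nonneg dpath_nth_in_V[OF P] \<open>P \<noteq> []\<close> by simp
  ultimately have c: "0 < ?c" by linarith
  have region: "fst (P ! k) \<le> ?c" "snd (Q ! 0) \<le> snd (P ! k)" if "k < length P" for k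
  proof -
    have "fst (P ! k) \<le> fst (P ! (length P - 1))" "snd (P ! (length P - 1)) \<le> snd (P ! k)"
      using dpath_coords_mono[OF P, of k "length P - 1"] that by auto
    then show "fst (P ! k) \<le> ?c" "snd (Q ! 0) \<le> snd (P ! k)"
      using last_P by auto
  qed
  have "skew_form W E (path_exp rs P) (path_exp rs Q)
      = (\<Sum>k < length P - 1. skew_form W E (edge_exp rs (P ! k, P ! Suc k)) (path_exp rs Q))"
    unfolding path_exp_def[of rs P] by (rule skew_form_sum_left)
  also have "\<dots> = (\<Sum>k < length P - 1. ?on_column (Suc k) - ?on_column k)"
  proof (rule sum.cong[OF refl])
    fix k
    assume "k \<in> {..<length P - 1}"
    then have k: "k < length P - 1" "k < length P" "Suc k < length P" by auto
    show "skew_form W E (edge_exp rs (P ! k, P ! Suc k)) (path_exp rs Q)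
        = ?on_column (Suc k) - ?on_column k"
      by (rule skew_form_edge_exp_path_exp[OF assms(2) c dpath_edge[OF P k(1)]
            region[OF k(2)] region[OF k(3)]])
  qed
  also have "\<dots> = ?on_column (length P - 1) - ?on_column 0"
    by (rule sum_lessThan_telescope)
  also have "\<dots> = 1"
    using start last_P(1) by simp
  finally show ?thesis .
qed

end

theorem lemmaA4:
  fixes V :: "pt set" and E :: "(pt \<times> pt) set" and rs cs P Q :: "pt list"
    and q :: "'k::field"
  assumes "se_graph V E rs cs"
    and "q \<noteq> 0"
    and "dpath E P" and "dpath E Q"
    and "standard E P" and "standard E Q"
    and "weakly_intersecting P Q"
    and "fst (last P) = fst (hd Q)"
    and "snd (last P) \<ge> snd (hd Q)"
  shows "qmul V E rs cs q (pwt V E rs cs q P) (pwt V E rs cs q Q)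
       = (\<lambda>c. q * qmul V E rs cs q (pwt V E rs cs q Q) (pwt V E rs cs q P) c)"
proof -
  interpret SE_graph V E rs cs by (rule SE_graph.intro) (fact assms(1))
  obtain \<gamma> where \<gamma>: "\<gamma> \<noteq> 0" "pwt V E rs cs q P = scaled_mono \<gamma> (path_exp rs P)"
    using pwt_eq_scaled_mono[OF assms(2)] by blast
  obtain \<delta> where \<delta>: "\<delta> \<noteq> 0" "pwt V E rs cs q Q = scaled_mono \<delta> (path_exp rs Q)"
    using pwt_eq_scaled_mono[OF assms(2)] by blast
  have "twist V E rs cs (path_exp rs P) (path_exp rs Q)
      = twist V E rs cs (path_exp rs Q) (path_exp rs P) + 1"
    unfolding twist_swap[OF finite_inner, of E "path_exp rs P"]
      skew_form_path_exp_path_exp[OF assms(5,6,8,9)] ..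
  then show ?thesis
    unfolding \<gamma>(2) \<delta>(2) by (rule qmul_scaled_mono_commute[OF assms(2) \<gamma>(1) \<delta>(1)])
qed

end
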